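(* There exist capacitated network graphs $G=(V,E)$ with arbitrarily many vertices, together with sets $\mathcal{D}$ of possible demand matrices, such that every per-destination routing $\phi$ on $G$ satisfies $PERF(\phi,\mathcal{D})=\Omega(|V|)$; i.e., the performance ratio of the optimal oblivious per-destination routing is $\Omega(|V|)$.
   Context: A network is a directed graph $G=(V,E)$ with a positive (possibly arbitrarily large) capacity $c_e$ on each edge $e$. A routing configuration $\phi$ assigns to each destination $t\in V$ and each edge $e=(u,v)\in E$ a value $\phi_t(e)\ge 0$, the fraction of the flow destined to $t$ entering $u$ that is forwarded on $e$, with $\sum_{e=(u,v)\in E}\phi_t(e)=1$ for every $u\neq t$. It is a per-destination (PD) routing if for every $t\in V$ and every directed cycle $C$ of $G$ there is an edge $e\in C$ with $\phi_t(e)=0$. For a PD routing, $f_{st}(s)=1$ and $f_{st}(v)=\sum_{e=(u,v)\in E}f_{st}(u)\phi_t(e)$ for $v\ne s$. For a demand matrix $D=(d_{st})$ with $d_{st}\ge0$, $MxLU(\phi,D)=\max_{e=(u,v)\in E}\frac{\sum_{s,t}d_{st}f_{st}(u)\phi_t(e)}{c_e}$, $OPTU(D)=\min_{\phi\text{ PD routing}}MxLU(\phi,D)$, and $PERF(\phi,\mathcal{D})=\max_{D\in\mathcal{D}}MxLU(\phi,D)/OPTU(D)$. *)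

theory Defs
  imports "HOL-Analysis.Analysis"
begin

definition network :: "nat set \<Rightarrow> (nat \<times> nat) set \<Rightarrow> (nat \<times> nat \<Rightarrow> real) \<Rightarrow> bool" where
  "network V E c \<longleftrightarrow> finite V \<and> E \<subseteq> V \<times> V \<and> (\<forall>e\<in>E. c e > 0)"

definition dcycle :: "(nat \<times> nat) set \<Rightarrow> nat list \<Rightarrow> bool" where
  "dcycle E vs \<longleftrightarrow> vs \<noteq> [] \<and> distinct vs \<and>
     (\<forall>i<length vs. (vs!i, vs!((i+1) mod length vs)) \<in> E)"

text \<open>Routing configuration: phi t e is the fraction of traffic to t forwarded on e.\<close>
definition routing_config :: "nat set \<Rightarrow> (nat \<times> nat) set \<Rightarrow> (nat \<Rightarrow> nat \<times> nat \<Rightarrow> real) \<Rightarrow> bool" where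
  "routing_config V E phi \<longleftrightarrow>
     (\<forall>t\<in>V. \<forall>e\<in>E. phi t e \<ge> 0) \<and>
     (\<forall>t\<in>V. \<forall>u\<in>V. u \<noteq> t \<longrightarrow> (\<Sum>e\<in>{e\<in>E. fst e = u}. phi t e) = 1)"

definition PD_routing :: "nat set \<Rightarrow> (nat \<times> nat) set \<Rightarrow> (nat \<Rightarrow> nat \<times> nat \<Rightarrow> real) \<Rightarrow> bool" where
  "PD_routing V E phi \<longleftrightarrow> routing_config V E phi \<and>
     (\<forall>t\<in>V. \<forall>vs. dcycle E vs \<longrightarrow>
        (\<exists>i<length vs. phi t (vs!i, vs!((i+1) mod length vs)) = 0))"

text \<open>f_{st}: the (unique, for PD routings) function with f_{st}(s) = 1 and
  f_{st}(v) = sum over edges (u,v) of f_{st}(u) phi_t(u,v) for v \<noteq> s (zero outside V).\<close>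
definition flow :: "nat set \<Rightarrow> (nat \<times> nat) set \<Rightarrow> (nat \<Rightarrow> nat \<times> nat \<Rightarrow> real) \<Rightarrow> nat \<Rightarrow> nat \<Rightarrow> nat \<Rightarrow> real" where
  "flow V E phi s t = (THE f. f s = 1 \<and> (\<forall>v. v \<notin> V \<longrightarrow> f v = 0) \<and>
      (\<forall>v\<in>V. v \<noteq> s \<longrightarrow> f v = (\<Sum>e\<in>{e\<in>E. snd e = v}. f (fst e) * phi t e)))"

definition MxLU :: "nat set \<Rightarrow> (nat \<times> nat) set \<Rightarrow> (nat \<times> nat \<Rightarrow> real) \<Rightarrow> (nat \<Rightarrow> nat \<times> nat \<Rightarrow> real)
                    \<Rightarrow> (nat \<Rightarrow> nat \<Rightarrow> real) \<Rightarrow> real" where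
  "MxLU V E c phi D = Max ((\<lambda>e. (\<Sum>s\<in>V. \<Sum>t\<in>V. D s t * flow V E phi s t (fst e) * phi t e) / c e) ` E)"

definition demand_matrix :: "nat set \<Rightarrow> (nat \<Rightarrow> nat \<Rightarrow> real) \<Rightarrow> bool" where
  "demand_matrix V D \<longleftrightarrow> (\<forall>s\<in>V. \<forall>t\<in>V. D s t \<ge> 0)"

definition OPTU :: "nat set \<Rightarrow> (nat \<times> nat) set \<Rightarrow> (nat \<times> nat \<Rightarrow> real) \<Rightarrow> (nat \<Rightarrow> nat \<Rightarrow> real) \<Rightarrow> real" where
  "OPTU V E c D = Inf {MxLU V E c phi D | phi. PD_routing V E phi}"

definition PERF :: "nat set \<Rightarrow> (nat \<times> nat) set \<Rightarrow> (nat \<times> nat \<Rightarrow> real) \<Rightarrow> (nat \<Rightarrow> nat \<times> nat \<Rightarrow> real)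
                    \<Rightarrow> (nat \<Rightarrow> nat \<Rightarrow> real) set \<Rightarrow> ereal" where
  "PERF V E c phi DD = (SUP D\<in>DD. ereal (MxLU V E c phi D / OPTU V E c D))"

end

theory Submission
  imports Defs
begin

text \<open>The network is the complete digraph on \<open>{0..n}\<close> with unit capacities, and the
  demands are the single-commodity demands of \<open>n\<close> units from some \<open>u \<noteq> 0\<close> to \<open>0\<close>.
  For every per-destination routing the edges used towards \<open>0\<close> form a DAG, so some
  \<open>u \<noteq> 0\<close> is minimal in it and sends everything on its direct edge to \<open>0\<close>; the demand
  from this \<open>u\<close> then loads that edge with \<open>n\<close>. Splitting the traffic of \<open>u\<close> evenly over
  its \<open>n\<close> out-edges and forwarding it directly to \<open>0\<close> afterwards has utilization \<open>1\<close>,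
  which is optimal since one out-edge of \<open>u\<close> carries at least the fraction \<open>1/n\<close>.\<close>

definition closed_walk :: "('a \<times> 'a) set \<Rightarrow> 'a list \<Rightarrow> bool" where
  "closed_walk R vs \<longleftrightarrow> vs \<noteq> [] \<and> (\<forall>i<length vs. (vs!i, vs!((i+1) mod length vs)) \<in> R)"

lemma ex_distinct_closed_walk:
  assumes "closed_walk R vs"
  shows "\<exists>ws. closed_walk R ws \<and> distinct ws"
  using assms
proof (induction "length vs" arbitrary: vs rule: less_induct)
  case less
  show ?case
  proof (cases "distinct vs")
    case True then show ?thesis using less.prems by blast
  next
    case False
    then obtain i j where ij: "i < j" "j < length vs" "vs!i = vs!j"
      by (metis distinct_conv_nth linorder_neqE_nat)
    define ws where "ws = take (j-i) (drop i vs)"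
    have len: "length ws = j - i" using ij by (simp add: ws_def)
    have nth: "\<And>k. k < j - i \<Longrightarrow> ws!k = vs!(i+k)" using ij by (simp add: ws_def)
    have step: "\<And>k. k < length vs \<Longrightarrow> (vs!k, vs!((k+1) mod length vs)) \<in> R"
      using less.prems by (simp add: closed_walk_def)
    have "closed_walk R ws"
      unfolding closed_walk_def
    proof (intro conjI allI impI)
      show "ws \<noteq> []" using len ij by auto
    next
      fix k assume k: "k < length ws"
      have edge: "(vs!(i+k), vs!((i+k+1) mod length vs)) \<in> R" using step[of "i+k"] k len ij by simp
      show "(ws!k, ws!((k+1) mod length ws)) \<in> R"
      proof (cases "k+1 < j - i")
        case True
        then have "(i+k+1) mod length vs = i+k+1" using ij by simp
        then show ?thesis using edge True k len nth by simp
      next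
        case False
        then have kk: "k+1 = j - i" using k len by simp
        then have "(i+k+1) mod length vs = j" "(k+1) mod length ws = 0" using ij len by simp_all
        then show ?thesis using edge kk k len nth[of 0] nth[of k] ij by simp
      qed
    qed
    moreover have "length ws < length vs" using len ij by simp
    ultimately show ?thesis using less.hyps by blast
  qed
qed

lemma closed_walk_if_trancl:
  assumes "(x, x) \<in> R\<^sup>+"
  shows "\<exists>vs. closed_walk R vs"
proof -
  obtain n where n: "n > 0" "(x, x) \<in> R^^n" using assms trancl_power by blast
  then obtain f where f: "f 0 = x" "f n = x" "\<forall>i<n. (f i, f (Suc i)) \<in> R"
    using relpow_fun_conv by metis
  define vs where "vs = map f [0..<n]"
  have "closed_walk R vs" unfolding closed_walk_def
  proof (intro conjI allI impI)
    show "vs \<noteq> []" using n by (simp add: vs_def)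
  next
    fix i assume i: "i < length vs"
    show "(vs!i, vs!((i+1) mod length vs)) \<in> R"
    proof (cases "i+1 < n")
      case True then show ?thesis using i f by (simp add: vs_def)
    next
      case False
      then have "i+1 = n" using i by (simp add: vs_def)
      moreover have "(f i, f (Suc i)) \<in> R" using f i by (simp add: vs_def)
      ultimately show ?thesis using i f n by (simp add: vs_def)
    qed
  qed
  then show ?thesis by blast
qed

definition routing_support ::
    "(nat \<times> nat) set \<Rightarrow> (nat \<Rightarrow> nat \<times> nat \<Rightarrow> real) \<Rightarrow> nat \<Rightarrow> (nat \<times> nat) set" where
  "routing_support E phi t = {e\<in>E. phi t e \<noteq> 0}"

lemma acyclic_routing_support:
  assumes PD: "PD_routing V E phi" and t: "t \<in> V"
  shows "acyclic (routing_support E phi t)"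
proof (rule ccontr)
  let ?R = "routing_support E phi t"
  assume "\<not> acyclic ?R"
  then obtain x where "(x, x) \<in> ?R\<^sup>+" by (auto simp: acyclic_def)
  then obtain vs where "closed_walk ?R vs" using closed_walk_if_trancl by metis
  then obtain ws where ws: "closed_walk ?R ws" "distinct ws" using ex_distinct_closed_walk by metis
  then have "dcycle E ws" unfolding closed_walk_def dcycle_def routing_support_def by blast
  then obtain i where "i < length ws" "phi t (ws!i, ws!((i+1) mod length ws)) = 0"
    using PD t unfolding PD_routing_def by blast
  then show False using ws unfolding closed_walk_def routing_support_def by blast
qed

lemma network_finite_edges: "network V E c \<Longrightarrow> finite E"
  unfolding network_def using finite_subset[of E "V \<times> V"] by blast

lemma finite_routing_support:
  assumes "network V E c"
  shows "finite (routing_support E phi t)"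
  using network_finite_edges[OF assms] by (simp add: routing_support_def)

lemma wf_routing_support:
  assumes "network V E c" "PD_routing V E phi" "t \<in> V"
  shows "wf (routing_support E phi t)"
  using finite_acyclic_wf[OF finite_routing_support acyclic_routing_support] assms .

lemma dcycle_has_zero_edge_if_potential:
  fixes h :: "nat \<Rightarrow> nat"
  assumes decr: "\<forall>e\<in>E. phi t e \<noteq> 0 \<longrightarrow> h (fst e) > h (snd e)" and cyc: "dcycle E vs"
  shows "\<exists>i<length vs. phi t (vs!i, vs!((i+1) mod length vs)) = 0"
proof -
  have ne: "vs \<noteq> []" using cyc by (simp add: dcycle_def)
  then obtain x where x: "x \<in> set vs" "h x = Min (h ` set vs)"
    by (metis (no_types, lifting) Min_in empty_is_image finite_imageI finite_set imageE set_empty)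
  then obtain i where i: "i < length vs" "vs!i = x" by (auto simp: in_set_conv_nth)
  let ?j = "(i+1) mod length vs"
  have "(vs!i, vs!?j) \<in> E" using cyc i(1) unfolding dcycle_def by blast
  moreover have "h (vs!?j) \<ge> h x" using ne x by simp
  ultimately have "phi t (vs!i, vs!?j) = 0" using decr i by fastforce
  then show ?thesis using i by blast
qed

definition is_flow :: "nat set \<Rightarrow> (nat \<times> nat) set \<Rightarrow> (nat \<Rightarrow> nat \<times> nat \<Rightarrow> real) \<Rightarrow>
    nat \<Rightarrow> nat \<Rightarrow> (nat \<Rightarrow> real) \<Rightarrow> bool" where
  "is_flow V E phi s t f \<longleftrightarrow> f s = 1 \<and> (\<forall>v. v \<notin> V \<longrightarrow> f v = 0) \<and>
      (\<forall>v\<in>V. v \<noteq> s \<longrightarrow> f v = (\<Sum>e\<in>{e\<in>E. snd e = v}. f (fst e) * phi t e))"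

lemma inflow_cong:
  assumes "\<And>a. (a, v) \<in> routing_support E phi t \<Longrightarrow> f a = g a"
  shows "(\<Sum>e\<in>{e\<in>E. snd e = v}. f (fst e) * phi t e) = (\<Sum>e\<in>{e\<in>E. snd e = v}. g (fst e) * phi t e)"
proof (rule sum.cong[OF refl])
  fix e assume "e \<in> {e\<in>E. snd e = v}"
  then show "f (fst e) * phi t e = g (fst e) * phi t e"
    using assms[of "fst e"] by (cases e) (auto simp: routing_support_def)
qed

lemma is_flow_unique:
  assumes "network V E c" "PD_routing V E phi" "t \<in> V"
    and f: "is_flow V E phi s t f" and g: "is_flow V E phi s t g"
  shows "f = g"
proof
  fix v
  show "f v = g v"
  proof (induction v rule: wf_induct_rule[OF wf_routing_support[OF assms(1-3)]])
    case (1 v)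
    then show ?case
      using f g inflow_cong[where E=E and phi=phi and t=t and v=v and f=f and g=g]
      by (cases "v \<in> V \<and> v \<noteq> s") (auto simp: is_flow_def)
  qed
qed

lemma is_flow_exists:
  assumes "network V E c" "PD_routing V E phi" "t \<in> V" "s \<in> V"
  shows "\<exists>f. is_flow V E phi s t f"
proof -
  let ?R = "routing_support E phi t"
  define F where "F = (\<lambda>g v. if v \<notin> V then 0 else if v = s then 1 else
                         (\<Sum>e\<in>{e\<in>E. snd e = v}. (g (fst e)::real) * phi t e))"
  have "adm_wf ?R F"
    unfolding adm_wf_def
  proof (intro allI impI)
    fix f g :: "nat \<Rightarrow> real" and v
    assume "\<forall>a. (a, v) \<in> ?R \<longrightarrow> f a = g a"
    then show "F f v = F g v" unfolding F_def using inflow_cong[where f=f and g=g] by simp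
  qed
  define f where "f = wfrec ?R F"
  have fixpoint: "f = F f"
    unfolding f_def using wfrec_fixpoint[OF wf_routing_support[OF assms(1-3)] \<open>adm_wf ?R F\<close>] .
  have "is_flow V E phi s t f"
    unfolding is_flow_def using assms(4) by (subst (1 2 3) fixpoint, simp add: F_def)
  then show ?thesis by blast
qed

lemma flow_eqI:
  assumes "network V E c" "PD_routing V E phi" "t \<in> V" "is_flow V E phi s t g"
  shows "flow V E phi s t = g"
proof -
  have "flow V E phi s t = (THE f. is_flow V E phi s t f)"
    by (simp add: flow_def is_flow_def)
  also have "\<dots> = g"
    using assms(4) is_flow_unique[OF assms(1-3) _ assms(4)] by (rule the_equality)
  finally show ?thesis .
qed

lemma flow_source:
  assumes "network V E c" "PD_routing V E phi" "t \<in> V" "s \<in> V"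
  shows "flow V E phi s t s = 1"
proof -
  obtain f where "is_flow V E phi s t f" using is_flow_exists[OF assms] by blast
  with flow_eqI[OF assms(1-3) this] show ?thesis by (simp add: is_flow_def)
qed

lemma PD_routing_last_hop:
  assumes "network V E c" "PD_routing V E phi" "t \<in> V" "x \<in> V - {t}"
  shows "\<exists>z\<in>V - {t}. \<forall>e\<in>E. fst e = z \<and> phi t e \<noteq> 0 \<longrightarrow> snd e = t"
proof -
  let ?R = "routing_support E phi t"
  have "wf (?R\<inverse>)"
    using finite_acyclic_wf_converse[OF finite_routing_support acyclic_routing_support] assms(1-3) .
  then obtain z where z: "z \<in> V - {t}" "\<And>y. (y, z) \<in> ?R\<inverse> \<Longrightarrow> y \<notin> V - {t}"
    by (rule wfE_min[OF _ assms(4)]) blast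
  have "b = t" if "(z, b) \<in> E" "phi t (z, b) \<noteq> 0" for b
  proof -
    have "b \<in> V" using that(1) assms(1) by (auto simp: network_def)
    moreover have "(z, b) \<in> ?R" using that by (simp add: routing_support_def)
    ultimately show ?thesis using z(2)[of b] by blast
  qed
  then show ?thesis using z(1) by force
qed

definition single_demand :: "nat \<Rightarrow> nat \<Rightarrow> real \<Rightarrow> nat \<Rightarrow> nat \<Rightarrow> real" where
  "single_demand s t d = (\<lambda>s' t'. if s' = s \<and> t' = t then d else 0)"

lemma MxLU_single_demand:
  assumes "network V E c" "s \<in> V" "t \<in> V"
  shows "MxLU V E c phi (single_demand s t d) =
         Max ((\<lambda>e. d * flow V E phi s t (fst e) * phi t e / c e) ` E)"
proof -
  have fin: "finite V" using assms(1) by (simp add: network_def)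
  have "(\<Sum>s'\<in>V. \<Sum>t'\<in>V. single_demand s t d s' t' * flow V E phi s' t' (fst e) * phi t' e)
        = d * flow V E phi s t (fst e) * phi t e" (is "?lhs = ?X") for e
  proof -
    have "single_demand s t d s' t' * flow V E phi s' t' (fst e) * phi t' e
          = (if s' = s \<and> t' = t then ?X else 0)" for s' t'
      by (simp add: single_demand_def)
    moreover have "(\<Sum>t'\<in>V. if s' = s \<and> t' = t then ?X else 0) = (if s' = s then ?X else 0)" for s'
      using fin assms(3) by (cases "s' = s") (simp_all add: sum.delta)
    ultimately show ?thesis using fin assms(2) by (simp add: sum.delta)
  qed
  then show ?thesis by (simp add: MxLU_def)
qed

lemma MxLU_single_demand_ge:
  assumes "network V E c" "s \<in> V" "t \<in> V" "e \<in> E"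
  shows "MxLU V E c phi (single_demand s t d) \<ge> d * flow V E phi s t (fst e) * phi t e / c e"
proof -
  have "finite E" using assms(1) by (rule network_finite_edges)
  then show ?thesis unfolding MxLU_single_demand[OF assms(1-3)] using assms(4) by simp
qed

lemma ex_ge_inverse_card_if_sum_eq_1:
  fixes f :: "'a \<Rightarrow> real"
  assumes "finite S" "sum f S = 1"
  shows "\<exists>x\<in>S. f x \<ge> 1 / card S"
proof (rule ccontr)
  assume "\<not> ?thesis"
  moreover have "S \<noteq> {}" using assms(2) by auto
  ultimately have "sum f S < (\<Sum>x\<in>S. 1 / card S)"
    using assms(1) by (intro sum_strict_mono) auto
  then show False using assms \<open>S \<noteq> {}\<close> by simp
qed

lemma MxLU_single_demand_ge_outdegree:
  assumes net: "network V E (\<lambda>_. 1)" and PD: "PD_routing V E phi"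
    and st: "s \<in> V" "t \<in> V" "s \<noteq> t" and d: "d \<ge> 0"
  shows "MxLU V E (\<lambda>_. 1) phi (single_demand s t d) \<ge> d / card {e\<in>E. fst e = s}"
proof -
  let ?S = "{e\<in>E. fst e = s}"
  have "finite ?S" using network_finite_edges[OF net] by simp
  moreover have "(\<Sum>e\<in>?S. phi t e) = 1"
    using PD st by (auto simp: PD_routing_def routing_config_def)
  ultimately obtain e where e: "e \<in> E" "fst e = s" "phi t e \<ge> 1 / card ?S"
    using ex_ge_inverse_card_if_sum_eq_1 by blast
  then have "d / card ?S \<le> d * phi t e"
    using d by (metis divide_inverse inverse_eq_divide mult_left_mono)
  also have "\<dots> = d * flow V E phi s t (fst e) * phi t e / 1"
    using flow_source[OF net PD st(2,1)] e(2) by simp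
  also have "\<dots> \<le> MxLU V E (\<lambda>_. 1) phi (single_demand s t d)"
    using MxLU_single_demand_ge[OF net st(1,2) e(1)] .
  finally show ?thesis .
qed

definition clique_edges :: "nat \<Rightarrow> (nat \<times> nat) set" where
  "clique_edges n = {(a, b). a \<in> {0..n} \<and> b \<in> {0..n} \<and> a \<noteq> b}"

lemma network_clique: "network {0..n} (clique_edges n) (\<lambda>_. 1)"
  by (auto simp: network_def clique_edges_def)

lemma clique_out_edges:
  "a \<le> n \<Longrightarrow> {e\<in>clique_edges n. fst e = a} = Pair a ` ({0..n} - {a})"
  by (auto simp: clique_edges_def)

lemma sum_clique_out_edges:
  "a \<le> n \<Longrightarrow> (\<Sum>e\<in>{e\<in>clique_edges n. fst e = a}. g e) = (\<Sum>b\<in>{0..n} - {a}. g (a, b))"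
  by (simp add: clique_out_edges sum.reindex inj_on_def)

lemma sum_clique_in_edges:
  assumes "a \<le> n"
  shows "(\<Sum>e\<in>{e\<in>clique_edges n. snd e = a}. g e) = (\<Sum>b\<in>{0..n} - {a}. g (b, a))"
proof -
  have "{e\<in>clique_edges n. snd e = a} = (\<lambda>b. (b, a)) ` ({0..n} - {a})"
    using assms by (auto simp: clique_edges_def)
  then show ?thesis by (simp add: sum.reindex inj_on_def)
qed

lemma card_clique_out_edges: "a \<le> n \<Longrightarrow> card {e\<in>clique_edges n. fst e = a} = n"
  by (simp add: clique_out_edges card_image inj_on_def)

lemma PD_routing_clique_last_hop:
  assumes PD: "PD_routing {0..n} (clique_edges n) phi" and n: "n \<ge> 1"
  obtains u where "u \<in> {1..n}" "phi 0 (u, 0) = 1"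
proof -
  have "(0::nat) \<in> {0..n}" "1 \<in> {0..n} - {0}" using n by simp_all
  then obtain z where z: "z \<in> {0..n} - {0}"
    and last_hop: "\<forall>e\<in>clique_edges n. fst e = z \<and> phi 0 e \<noteq> 0 \<longrightarrow> snd e = 0"
    using PD_routing_last_hop[OF network_clique PD] by blast
  have "1 = (\<Sum>e\<in>{e\<in>clique_edges n. fst e = z}. phi 0 e)"
    using PD z by (simp add: PD_routing_def routing_config_def)
  also have "\<dots> = (\<Sum>b\<in>{0..n} - {z}. phi 0 (z, b))"
    using z by (simp add: sum_clique_out_edges)
  also have "\<dots> = (\<Sum>b\<in>{0..n} - {z}. if b = 0 then phi 0 (z, b) else 0)"
  proof (rule sum.cong[OF refl])
    fix b assume "b \<in> {0..n} - {z}"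
    then have "(z, b) \<in> clique_edges n" using z by (simp add: clique_edges_def)
    then show "phi 0 (z, b) = (if b = 0 then phi 0 (z, b) else 0)" using last_hop by auto
  qed
  also have "\<dots> = phi 0 (z, 0)" using z by (simp add: sum.delta)
  finally show ?thesis using that[of z] z by simp
qed

definition spread_routing :: "nat \<Rightarrow> nat \<Rightarrow> nat \<Rightarrow> nat \<times> nat \<Rightarrow> real" where
  "spread_routing n u t e = (if t = 0 \<and> fst e = u then 1 / real n else if snd e = t then 1 else 0)"

lemma PD_routing_spread_routing:
  assumes n: "n \<ge> 1" and u: "u \<in> {1..n}"
  shows "PD_routing {0..n} (clique_edges n) (spread_routing n u)"
  unfolding PD_routing_def routing_config_def
proof (intro conjI ballI allI impI)
  fix t e
  show "spread_routing n u t e \<ge> 0" by (simp add: spread_routing_def)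
next
  fix t a assume t: "t \<in> {0..n}" and a: "a \<in> {0..n}" and at: "a \<noteq> t"
  show "(\<Sum>e\<in>{e\<in>clique_edges n. fst e = a}. spread_routing n u t e) = 1"
  proof (cases "t = 0 \<and> a = u")
    case True
    then have "(\<Sum>e\<in>{e\<in>clique_edges n. fst e = a}. spread_routing n u t e)
             = (\<Sum>e\<in>{e\<in>clique_edges n. fst e = a}. 1 / real n)"
      by (intro sum.cong) (simp_all add: spread_routing_def)
    then show ?thesis using a n by (simp add: card_clique_out_edges)
  next
    case False
    then have "(\<Sum>e\<in>{e\<in>clique_edges n. fst e = a}. spread_routing n u t e)
             = (\<Sum>b\<in>{0..n} - {a}. if b = t then 1 else 0)"
      using a by (auto simp: sum_clique_out_edges spread_routing_def intro!: sum.cong)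
    then show ?thesis using t at by (simp add: sum.delta)
  qed
next
  fix t vs assume "dcycle (clique_edges n) vs"
  define h :: "nat \<Rightarrow> nat" where "h x = (if x = t then 0 else if t = 0 \<and> x = u then 2 else 1)" for x
  have "\<forall>e\<in>clique_edges n. spread_routing n u t e \<noteq> 0 \<longrightarrow> h (fst e) > h (snd e)"
    using u by (auto simp: h_def clique_edges_def spread_routing_def split: if_splits)
  then show "\<exists>i<length vs. spread_routing n u t (vs!i, vs!((i+1) mod length vs)) = 0"
    using \<open>dcycle (clique_edges n) vs\<close> by (rule dcycle_has_zero_edge_if_potential)
qed

lemma flow_spread_routing:
  assumes n: "n \<ge> 1" and u: "u \<in> {1..n}"
  shows "flow {0..n} (clique_edges n) (spread_routing n u) u 0 =
         (\<lambda>v. if v \<notin> {0..n} then 0 else if v = u \<or> v = 0 then 1 else 1 / real n)"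
    (is "_ = ?g")
proof (rule flow_eqI[OF network_clique PD_routing_spread_routing[OF n u]])
  show "(0::nat) \<in> {0..n}" by simp
  show "is_flow {0..n} (clique_edges n) (spread_routing n u) u 0 ?g"
    unfolding is_flow_def
  proof (intro conjI allI impI ballI)
    show "?g u = 1" using u by simp
  next
    fix v assume "v \<notin> {0..n}" then show "?g v = 0" by simp
  next
    fix v assume v: "v \<in> {0..n}" "v \<noteq> u"
    have inflow: "(\<Sum>e\<in>{e\<in>clique_edges n. snd e = v}. ?g (fst e) * spread_routing n u 0 e)
          = (\<Sum>b\<in>{0..n} - {v}. ?g b * spread_routing n u 0 (b, v))"
      using v(1) by (simp add: sum_clique_in_edges)
    show "?g v = (\<Sum>e\<in>{e\<in>clique_edges n. snd e = v}. ?g (fst e) * spread_routing n u 0 e)"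
    proof (cases "v = 0")
      case True
      have "(\<Sum>b\<in>{0..n} - {v}. ?g b * spread_routing n u 0 (b, v)) = (\<Sum>b\<in>{0..n} - {v}. 1 / real n)"
        using True u by (intro sum.cong) (auto simp: spread_routing_def)
      also have "\<dots> = 1" using n v(1) by simp
      finally show ?thesis using True inflow by simp
    next
      case False
      have "(\<Sum>b\<in>{0..n} - {v}. ?g b * spread_routing n u 0 (b, v))
          = (\<Sum>b\<in>{0..n} - {v}. if b = u then 1 / real n else 0)"
        using False u v by (intro sum.cong) (auto simp: spread_routing_def)
      also have "\<dots> = 1 / real n" using u v by (simp add: sum.delta)
      finally show ?thesis using False v inflow by simp
    qed
  qed
qed

lemma MxLU_spread_routing:
  assumes n: "n \<ge> 1" and u: "u \<in> {1..n}"
  shows "MxLU {0..n} (clique_edges n) (\<lambda>_. 1) (spread_routing n u) (single_demand u 0 (real n)) \<le> 1"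
proof -
  let ?g = "flow {0..n} (clique_edges n) (spread_routing n u) u 0"
  have load: "real n * ?g a * spread_routing n u 0 (a, b) / 1 \<le> 1" if "(a, b) \<in> clique_edges n" for a b
    using that n u unfolding flow_spread_routing[OF n u]
    by (auto simp: spread_routing_def clique_edges_def)
  have "(u, 0) \<in> clique_edges n" using u by (simp add: clique_edges_def)
  then show ?thesis
    using u network_finite_edges[OF network_clique] load
    by (auto simp: MxLU_single_demand[OF network_clique] intro!: Max.boundedI)
qed

lemma OPTU_single_demand_clique:
  assumes n: "n \<ge> 1" and u: "u \<in> {1..n}"
  shows "OPTU {0..n} (clique_edges n) (\<lambda>_. 1) (single_demand u 0 (real n)) = 1"
proof -
  let ?S = "{MxLU {0..n} (clique_edges n) (\<lambda>_. 1) phi (single_demand u 0 (real n)) | phi.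
             PD_routing {0..n} (clique_edges n) phi}"
  have lower: "1 \<le> x" if "x \<in> ?S" for x
  proof -
    from that obtain phi where phi: "PD_routing {0..n} (clique_edges n) phi"
      and x: "x = MxLU {0..n} (clique_edges n) (\<lambda>_. 1) phi (single_demand u 0 (real n))"
      by blast
    have "real n / card {e\<in>clique_edges n. fst e = u} = 1"
      using u n by (simp add: card_clique_out_edges)
    then show ?thesis
      using MxLU_single_demand_ge_outdegree[OF network_clique phi, of u 0 "real n"] u x by simp
  qed
  have spread: "MxLU {0..n} (clique_edges n) (\<lambda>_. 1) (spread_routing n u) (single_demand u 0 (real n)) \<in> ?S"
    using PD_routing_spread_routing[OF n u] by blast
  have "Inf ?S \<le> 1"
    using cInf_lower[OF spread] lower MxLU_spread_routing[OF n u] by (meson bdd_belowI order_trans)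
  moreover have "Inf ?S \<ge> 1" using spread lower by (intro cInf_greatest) auto
  ultimately show ?thesis unfolding OPTU_def by simp
qed

lemma PD_routing_clique_overloaded:
  assumes PD: "PD_routing {0..n} (clique_edges n) phi" and n: "n \<ge> 1"
  obtains u where "u \<in> {1..n}"
    "MxLU {0..n} (clique_edges n) (\<lambda>_. 1) phi (single_demand u 0 (real n)) \<ge> real n"
proof -
  obtain u where u: "u \<in> {1..n}" "phi 0 (u, 0) = 1"
    using PD_routing_clique_last_hop[OF PD n] .
  have uV: "u \<in> {0..n}" and zV: "(0::nat) \<in> {0..n}" and edge: "(u, 0) \<in> clique_edges n"
    using u(1) by (auto simp: clique_edges_def)
  have "real n * flow {0..n} (clique_edges n) phi u 0 (fst (u, 0)) * phi 0 (u, 0) / 1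
        \<le> MxLU {0..n} (clique_edges n) (\<lambda>_. 1) phi (single_demand u 0 (real n))"
    using MxLU_single_demand_ge[OF network_clique uV zV edge] by simp
  then show ?thesis
    using that u flow_source[OF network_clique PD zV uV] by simp
qed

theorem theorem2:
  shows "\<exists>C::real. C > 0 \<and> (\<forall>N::nat. \<exists>V E c DD.
           network V E c \<and> card V \<ge> N \<and>
           (\<exists>phi. PD_routing V E phi) \<and>
           (\<forall>D\<in>DD. demand_matrix V D) \<and>
           (\<forall>phi. PD_routing V E phi \<longrightarrow> PERF V E c phi DD \<ge> ereal (C * real (card V))))"
proof (intro exI[of _ "1/2"] conjI allI)
  fix N :: nat
  define n where "n = N + 1"
  have n: "n \<ge> 1" and "1 \<in> {1..n}" by (simp_all add: n_def)
  let ?DD = "(\<lambda>u. single_demand u 0 (real n)) ` {1..n}"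
  have "PERF {0..n} (clique_edges n) (\<lambda>_. 1) phi ?DD \<ge> ereal (1/2 * real (card {0..n}))"
    if PD: "PD_routing {0..n} (clique_edges n) phi" for phi
  proof -
    obtain u where u: "u \<in> {1..n}"
      and overload: "MxLU {0..n} (clique_edges n) (\<lambda>_. 1) phi (single_demand u 0 (real n)) \<ge> real n"
      using PD_routing_clique_overloaded[OF PD n] .
    have "ereal (1/2 * real (card {0..n})) \<le> ereal (real n)" using n by simp
    also have "\<dots> \<le> ereal (MxLU {0..n} (clique_edges n) (\<lambda>_. 1) phi (single_demand u 0 (real n))
                   / OPTU {0..n} (clique_edges n) (\<lambda>_. 1) (single_demand u 0 (real n)))"
      using overload OPTU_single_demand_clique[OF n u] by simp
    also have "\<dots> \<le> PERF {0..n} (clique_edges n) (\<lambda>_. 1) phi ?DD"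
      unfolding PERF_def using u by (intro SUP_upper) simp
    finally show ?thesis .
  qed
  moreover have "card {0..n} \<ge> N" by (simp add: n_def)
  ultimately show "\<exists>V E c DD. network V E c \<and> card V \<ge> N \<and> (\<exists>phi. PD_routing V E phi) \<and>
           (\<forall>D\<in>DD. demand_matrix V D) \<and>
           (\<forall>phi. PD_routing V E phi \<longrightarrow> PERF V E c phi DD \<ge> ereal (1/2 * real (card V)))"
    using network_clique PD_routing_spread_routing[OF n \<open>1 \<in> {1..n}\<close>]
    by (intro exI[of _ "{0..n}"] exI[of _ "clique_edges n"] exI[of _ "\<lambda>_. 1"] exI[of _ ?DD])
      (auto simp: demand_matrix_def single_demand_def)
qed simp

end
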